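(* Let $f: (\mathbb{R}^{+})^n \to (\mathbb{R}^{+})^n$ be homogeneous and monotone such that $\mathcal{G}(f)$ is strongly connected. Then for every $\lambda \in \mathbb{R}^{+}$ the super-eigenspace $S^\lambda(f) = \{x \in (\mathbb{R}^{+})^n : f(x) \le \lambda x\}$ is bounded in the Hilbert projective metric.
   Context: Homogeneous: $f(\lambda x) = \lambda f(x)$ for all $\lambda > 0$; monotone: $x \le y$ componentwise implies $f(x) \le f(y)$. For $u > 0$ and $J \subseteq \{1,\dots,n\}$, $u_J$ is the vector with entries $u$ on $J$ and $1$ off $J$. $\mathcal{G}(f)$ is the directed graph on $\{1,\dots,n\}$ with an edge $i \to j$ iff $\lim_{u\to\infty} f_i(u_{\{j\}}) = \infty$. Hilbert projective metric: $d_H(y,z) = \max_i \log(y_i/z_i) - \min_i \log(y_i/z_i)$; a set $A$ is bounded if $\sup_{y,z\in A} d_H(y,z) < \infty$ (the empty set is bounded). *)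

theory Defs
  imports "HOL-Analysis.Analysis"
begin

definition pos_vec :: "real^'n \<Rightarrow> bool" where
  "pos_vec x \<longleftrightarrow> (\<forall>i. x $ i > 0)"

definition homogeneous_pos :: "(real^'n \<Rightarrow> real^'n) \<Rightarrow> bool" where
  "homogeneous_pos f \<longleftrightarrow>
     (\<forall>x l. pos_vec x \<longrightarrow> l > 0 \<longrightarrow> f (l *\<^sub>R x) = l *\<^sub>R f x)"

definition monotone_pos :: "(real^'n \<Rightarrow> real^'n) \<Rightarrow> bool" where
  "monotone_pos f \<longleftrightarrow>
     (\<forall>x y. pos_vec x \<longrightarrow> pos_vec y \<longrightarrow> (\<forall>i. x $ i \<le> y $ i) \<longrightarrow>
        (\<forall>i. f x $ i \<le> f y $ i))"

definition uvec :: "real \<Rightarrow> 'n set \<Rightarrow> real^'n" where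
  "uvec u J = (\<chi> i. if i \<in> J then u else 1)"

definition graph_of :: "(real^'n \<Rightarrow> real^'n) \<Rightarrow> ('n \<times> 'n) set" where
  "graph_of f = {(i, j). filterlim (\<lambda>u. f (uvec u {j}) $ i) at_top at_top}"

definition strongly_connected_rel :: "('n \<times> 'n) set \<Rightarrow> bool" where
  "strongly_connected_rel E \<longleftrightarrow> (\<forall>i j. (i, j) \<in> E\<^sup>*)"

definition hilbert_dist :: "real^'n::finite \<Rightarrow> real^'n \<Rightarrow> real" where
  "hilbert_dist y z =
     Max (range (\<lambda>i. ln (y $ i / z $ i))) - Min (range (\<lambda>i. ln (y $ i / z $ i)))"

definition hilbert_bounded :: "(real^'n::finite) set \<Rightarrow> bool" where
  "hilbert_bounded A \<longleftrightarrow> (\<exists>C. \<forall>y\<in>A. \<forall>z\<in>A. hilbert_dist y z \<le> C)"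

definition super_eigenspace :: "(real^'n \<Rightarrow> real^'n) \<Rightarrow> real \<Rightarrow> (real^'n) set" where
  "super_eigenspace f l = {x. pos_vec x \<and> (\<forall>i. f x $ i \<le> l * x $ i)}"

end

theory Submission
  imports Defs
begin

text \<open>
  Fix \<open>x\<close> in the super-eigenspace and a lower bound \<open>t > 0\<close> of its entries. If \<open>i \<rightarrow> j\<close> is an
  edge, then \<open>t u\<^sub>{\<^sub>j\<^sub>} \<le> x\<close> for \<open>u = x\<^sub>j / t\<close>, so homogeneity and monotonicity give
  \<open>t f\<^sub>i(u\<^sub>{\<^sub>j\<^sub>}) \<le> f\<^sub>i(x) \<le> \<lambda> x\<^sub>i\<close>. As \<open>f\<^sub>i(u\<^sub>{\<^sub>j\<^sub>}) \<rightarrow> \<infinity>\<close>, a bound \<open>x\<^sub>i \<le> K t\<close> therefore forces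
  \<open>x\<^sub>j \<le> B t\<close> with \<open>B\<close> independent of \<open>x\<close>. Following paths from a minimal coordinate, strong
  connectivity bounds all ratios \<open>x\<^sub>j / min x\<close> uniformly, and this bounds the Hilbert diameter.
\<close>

definition bound_propagates :: "(real^'n \<Rightarrow> real^'n) \<Rightarrow> real \<Rightarrow> 'n \<Rightarrow> 'n \<Rightarrow> bool" where
  "bound_propagates f l i j \<longleftrightarrow> (\<forall>K. \<exists>B. \<forall>x\<in>super_eigenspace f l. \<forall>t>0.
      (\<forall>k. t \<le> x $ k) \<longrightarrow> x $ i \<le> K * t \<longrightarrow> x $ j \<le> B * t)"

lemma bound_propagates_refl: "bound_propagates f l i i"
  unfolding bound_propagates_def by blast

lemma bound_propagates_trans:
  assumes "bound_propagates f l i j" and "bound_propagates f l j k"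
  shows "bound_propagates f l i k"
  unfolding bound_propagates_def
proof
  fix K
  obtain B where "\<forall>x\<in>super_eigenspace f l. \<forall>t>0.
      (\<forall>k. t \<le> x $ k) \<longrightarrow> x $ i \<le> K * t \<longrightarrow> x $ j \<le> B * t"
    using assms(1) unfolding bound_propagates_def by blast
  moreover obtain B' where "\<forall>x\<in>super_eigenspace f l. \<forall>t>0.
      (\<forall>k. t \<le> x $ k) \<longrightarrow> x $ j \<le> B * t \<longrightarrow> x $ k \<le> B' * t"
    using assms(2) unfolding bound_propagates_def by blast
  ultimately show "\<exists>B'. \<forall>x\<in>super_eigenspace f l. \<forall>t>0.
      (\<forall>k. t \<le> x $ k) \<longrightarrow> x $ i \<le> K * t \<longrightarrow> x $ k \<le> B' * t"
    by blast
qed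

lemma super_eigenspace_uvec_bound:
  assumes hom: "homogeneous_pos f" and mon: "monotone_pos f"
    and x: "x \<in> super_eigenspace f l" and t: "t > 0" and lower: "\<forall>k. t \<le> x $ k"
  shows "t * f (uvec (x $ j / t) {j}) $ i \<le> l * x $ i"
proof -
  let ?v = "uvec (x $ j / t) {j}"
  have x_pos: "pos_vec x"
    using x unfolding super_eigenspace_def by simp
  then have v_pos: "pos_vec ?v"
    using t unfolding pos_vec_def uvec_def by simp
  then have tv_pos: "pos_vec (t *\<^sub>R ?v)"
    using t unfolding pos_vec_def by simp
  have tv_le_x: "\<forall>k. (t *\<^sub>R ?v) $ k \<le> x $ k"
    using lower t unfolding uvec_def by auto
  have "t * f ?v $ i = f (t *\<^sub>R ?v) $ i"
    using hom v_pos t unfolding homogeneous_pos_def by simp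
  also have "\<dots> \<le> f x $ i"
    using mon tv_pos x_pos tv_le_x unfolding monotone_pos_def by blast
  also have "\<dots> \<le> l * x $ i"
    using x unfolding super_eigenspace_def by simp
  finally show ?thesis .
qed

lemma bound_propagates_edge:
  assumes hom: "homogeneous_pos f" and mon: "monotone_pos f" and l: "l > 0"
    and edge: "(i, j) \<in> graph_of f"
  shows "bound_propagates f l i j"
  unfolding bound_propagates_def
proof
  fix K
  have "filterlim (\<lambda>u. f (uvec u {j}) $ i) at_top at_top"
    using edge unfolding graph_of_def by simp
  then have "eventually (\<lambda>u. l * K < f (uvec u {j}) $ i) at_top"
    by (rule filterlim_at_top_dense[THEN iffD1, rule_format])
  then obtain N where N: "\<And>u. u \<ge> N \<Longrightarrow> l * K < f (uvec u {j}) $ i"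
    unfolding eventually_at_top_linorder by blast
  have "x $ j \<le> N * t"
    if x: "x \<in> super_eigenspace f l" and t: "t > 0" and lower: "\<forall>k. t \<le> x $ k"
      and xi: "x $ i \<le> K * t" for x t
  proof -
    have "t * f (uvec (x $ j / t) {j}) $ i \<le> l * x $ i"
      by (rule super_eigenspace_uvec_bound[OF hom mon x t lower])
    also have "\<dots> \<le> t * (l * K)"
      using xi l by (simp add: mult_left_mono mult.commute mult.left_commute)
    finally have "t * f (uvec (x $ j / t) {j}) $ i \<le> t * (l * K)" .
    then have "f (uvec (x $ j / t) {j}) $ i \<le> l * K"
      using t by simp
    then have "x $ j / t < N"
      using N[of "x $ j / t"] by linarith
    then show ?thesis
      using t by (simp add: divide_less_eq)
  qed
  then show "\<exists>B. \<forall>x\<in>super_eigenspace f l. \<forall>t>0.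
      (\<forall>k. t \<le> x $ k) \<longrightarrow> x $ i \<le> K * t \<longrightarrow> x $ j \<le> B * t"
    by blast
qed

lemma bound_propagates_path:
  assumes "homogeneous_pos f" and "monotone_pos f" and "l > 0"
    and "(i, j) \<in> (graph_of f)\<^sup>*"
  shows "bound_propagates f l i j"
  using assms(4)
proof (induction rule: rtrancl_induct)
  case base
  show ?case by (rule bound_propagates_refl)
next
  case (step j k)
  then show ?case
    using bound_propagates_trans bound_propagates_edge[OF assms(1-3)] by blast
qed

lemma super_eigenspace_uniform_spread:
  fixes f :: "real^'n::finite \<Rightarrow> real^'n"
  assumes "\<And>i j. bound_propagates f l i j"
  shows "\<exists>C. \<forall>x\<in>super_eigenspace f l. \<exists>t>0. \<forall>k. t \<le> x $ k \<and> x $ k \<le> C * t"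
proof -
  have "\<forall>p::'n \<times> 'n. \<exists>B. \<forall>x\<in>super_eigenspace f l. \<forall>t>0.
      (\<forall>k. t \<le> x $ k) \<longrightarrow> x $ fst p \<le> 1 * t \<longrightarrow> x $ snd p \<le> B * t"
    using assms unfolding bound_propagates_def by blast
  then obtain B where B: "\<And>i j x t. x \<in> super_eigenspace f l \<Longrightarrow> t > 0 \<Longrightarrow>
      \<forall>k. t \<le> x $ k \<Longrightarrow> x $ i \<le> t \<Longrightarrow> x $ j \<le> B (i, j) * t"
    by (metis fst_conv snd_conv mult_1)
  define C where "C = Max (range B)"
  have "\<exists>t>0. \<forall>k. t \<le> x $ k \<and> x $ k \<le> C * t" if x: "x \<in> super_eigenspace f l" for x
  proof -
    have "Min (range (($) x)) \<in> range (($) x)"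
      by (rule Min_in) auto
    then obtain i where "x $ i = Min (range (($) x))"
      by (metis rangeE)
    then have lower: "\<forall>k. x $ i \<le> x $ k"
      by simp
    have t: "x $ i > 0"
      using x unfolding super_eigenspace_def pos_vec_def by simp
    have "x $ k \<le> C * x $ i" for k
    proof -
      have "x $ k \<le> B (i, k) * x $ i"
        using B[OF x t lower] by simp
      also have "\<dots> \<le> C * x $ i"
        using t unfolding C_def by (simp add: mult_right_mono)
      finally show ?thesis .
    qed
    then show ?thesis
      using lower t by blast
  qed
  then show ?thesis by blast
qed

lemma hilbert_dist_le_bounds:
  fixes y z :: "real^'n::finite"
  assumes "\<And>i. m \<le> ln (y $ i / z $ i)" and "\<And>i. ln (y $ i / z $ i) \<le> M"
  shows "hilbert_dist y z \<le> M - m"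
proof -
  have "Max (range (\<lambda>i. ln (y $ i / z $ i))) \<le> M"
    using assms(2) by (simp add: Max_le_iff)
  moreover have "m \<le> Min (range (\<lambda>i. ln (y $ i / z $ i)))"
    using assms(1) by (simp add: Min_ge_iff)
  ultimately show ?thesis
    unfolding hilbert_dist_def by linarith
qed

lemma hilbert_dist_le_spread:
  fixes y z :: "real^'n::finite"
  assumes s: "s > 0" and y: "\<forall>k. s \<le> y $ k \<and> y $ k \<le> C * s"
    and t: "t > 0" and z: "\<forall>k. t \<le> z $ k \<and> z $ k \<le> C * t"
  shows "hilbert_dist y z \<le> 2 * ln C"
proof -
  have "s \<le> C * s"
    using y by (meson order.trans)
  then have C: "C > 0"
    using s by (simp add: zero_less_mult_iff)
  have "ln (s / (C * t)) \<le> ln (y $ i / z $ i) \<and> ln (y $ i / z $ i) \<le> ln (C * s / t)" for i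
  proof -
    have yi: "s \<le> y $ i" "y $ i \<le> C * s" and zi: "t \<le> z $ i" "z $ i \<le> C * t"
      using y z by auto
    have "s / (C * t) \<le> y $ i / z $ i"
      using yi zi s t by (intro frac_le) auto
    moreover have "y $ i / z $ i \<le> C * s / t"
      using yi zi s t C by (intro frac_le) auto
    ultimately show ?thesis
      using yi zi s t C by simp
  qed
  then have "hilbert_dist y z \<le> ln (C * s / t) - ln (s / (C * t))"
    by (intro hilbert_dist_le_bounds) auto
  also have "\<dots> = 2 * ln C"
    using s t C by (simp add: ln_div ln_mult)
  finally show ?thesis .
qed

theorem theorem4:
  fixes f :: "real^'n::finite \<Rightarrow> real^'n" and l :: real
  assumes "\<And>x. pos_vec x \<Longrightarrow> pos_vec (f x)"
    and "homogeneous_pos f"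
    and "monotone_pos f"
    and "strongly_connected_rel (graph_of f)"
    and "l > 0"
  shows "hilbert_bounded (super_eigenspace f l)"
proof -
  have "bound_propagates f l i j" for i j
    using bound_propagates_path[OF assms(2,3,5)] assms(4)
    unfolding strongly_connected_rel_def by blast
  then obtain C where C: "\<forall>x\<in>super_eigenspace f l. \<exists>t>0. \<forall>k. t \<le> x $ k \<and> x $ k \<le> C * t"
    using super_eigenspace_uniform_spread by blast
  show ?thesis
    unfolding hilbert_bounded_def using C hilbert_dist_le_spread by meson
qed

end
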